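(* Let $n\ge 2$ and $\alpha\in(0,1)$. Then $$\{\mathrm{DQ}^{\mathrm{VaR}}_\alpha(\mathbf X):\mathbf X\in (L^0)^n\}=[0,\min\{n,1/\alpha\}]\quad\text{and}\quad \{\mathrm{DQ}^{\mathrm{ES}}_\alpha(\mathbf X):\mathbf X\in (L^1)^n\}=[0,1].$$
   Context: Let $(\Omega,\mathcal F,\mathbb P)$ be an atomless probability space. $L^0$ is the set of all random variables and $L^1$ the set of integrable random variables; a.s. equal random variables are identified. For $\alpha\in[0,1)$ and $X\in L^0$, $\mathrm{VaR}_\alpha(X)=\inf\{x\in\mathbb R:\mathbb P(X\le x)\ge 1-\alpha\}$; in particular $\mathrm{VaR}_0(X)=\operatorname{ess\,sup}X$, possibly $+\infty$. For $\alpha\in(0,1)$ and $X\in L^1$, $\mathrm{ES}_\alpha(X)=\frac1\alpha\int_0^\alpha\mathrm{VaR}_\beta(X)\,\mathrm d\beta$, and $\mathrm{ES}_0(X)=\operatorname{ess\,sup}X$. For $\rho\in\{\mathrm{VaR},\mathrm{ES}\}$, $\alpha\in(0,1)$ and $\mathbf X=(X_1,\dots,X_n)$ (in $(L^0)^n$ when $\rho=\mathrm{VaR}$, in $(L^1)^n$ when $\rho=\mathrm{ES}$), the diversification quotient is $\mathrm{DQ}^\rho_\alpha(\mathbf X)=\alpha^*/\alpha$, where $\alpha^*=\inf\{\beta\in(0,1):\rho_\beta(\sum_{i=1}^nX_i)\le\sum_{i=1}^n\rho_\alpha(X_i)\}$, with the convention $\inf\emptyset=1$. *)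

theory Defs
  imports "HOL-Probability.Probability"
begin

definition atomless :: "'a measure \<Rightarrow> bool" where
  "atomless M \<longleftrightarrow> (\<forall>A\<in>sets M. 0 < measure M A \<longrightarrow>
      (\<exists>B\<in>sets M. B \<subseteq> A \<and> 0 < measure M B \<and> measure M B < measure M A))"

definition VaR :: "'a measure \<Rightarrow> real \<Rightarrow> ('a \<Rightarrow> real) \<Rightarrow> real" where
  "VaR M \<alpha> X = Inf {x. measure M {\<omega> \<in> space M. X \<omega> \<le> x} \<ge> 1 - \<alpha>}"

definition ES :: "'a measure \<Rightarrow> real \<Rightarrow> ('a \<Rightarrow> real) \<Rightarrow> real" where
  "ES M \<alpha> X = (\<integral>\<beta>\<in>{0<..<\<alpha>}. VaR M \<beta> X \<partial>lborel) / \<alpha>"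

definition DQ :: "(real \<Rightarrow> ('a \<Rightarrow> real) \<Rightarrow> real) \<Rightarrow> real \<Rightarrow> nat \<Rightarrow> (nat \<Rightarrow> 'a \<Rightarrow> real) \<Rightarrow> real" where
  "DQ \<rho> \<alpha> n X =
     (let S = {\<beta> \<in> {0<..<1}. \<rho> \<beta> (\<lambda>\<omega>. \<Sum>i<n. X i \<omega>) \<le> (\<Sum>i<n. \<rho> \<alpha> (X i))}
      in (if S = {} then 1 else Inf S) / \<alpha>)"

end

(*
  A union bound gives VaR_{n alpha}(X_1 + ... + X_n) <= VaR_alpha(X_1) + ... +
  VaR_alpha(X_n) whenever n alpha < 1, so DQ^VaR <= n; DQ <= 1/alpha always holds because the
  infimum defining alpha^* is at most 1. For ES, subadditivity (obtained from the
  Rockafellar-Uryasev formula, itself a consequence of the quantile transform) makes alpha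
  admissible, so DQ^ES <= 1.

  On an atomless space every value in [0, P(A)] is the probability of a subset of A.
  Portfolios of indicators of suitably sized events then have exactly [t alpha, 1) as their set of
  admissible levels, so every t in the claimed range is a value of DQ.
*)

theory Submission
  imports Defs
begin

lemma Inf_superlevel_le_iff:
  fixes F :: "real \<Rightarrow> real"
  assumes mono: "mono F" and right_cont: "\<And>a. continuous (at_right a) F"
    and bot: "(F \<longlongrightarrow> 0) at_bot" and top: "(F \<longlongrightarrow> 1) at_top"
    and c: "0 < c" "c < 1"
  shows "Inf {x. c \<le> F x} \<le> y \<longleftrightarrow> c \<le> F y"
proof -
  let ?Q = "{x. c \<le> F x}"
  have "eventually (\<lambda>x. c < F x) at_top"
    using top c by (simp add: order_tendsto_iff)
  then obtain x0 where "\<And>x. x \<ge> x0 \<Longrightarrow> c < F x" by (auto simp: eventually_at_top_linorder)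
  hence nonempty: "x0 \<in> ?Q" by fastforce
  have "eventually (\<lambda>x. F x < c) at_bot"
    using bot c by (simp add: order_tendsto_iff)
  then obtain x1 where x1: "\<And>x. x \<le> x1 \<Longrightarrow> F x < c" by (auto simp: eventually_at_bot_linorder)
  have bdd: "bdd_below ?Q"
    using x1 by (intro bdd_belowI[of _ x1]) (meson mem_Collect_eq not_le less_imp_le not_less)
  let ?m = "Inf ?Q"
  have "eventually (\<lambda>x. c \<le> F x) (at_right ?m)"
  proof (rule eventually_at_rightI[where b = "?m + 1"])
    fix x assume "x \<in> {?m<..<?m+1}"
    then obtain q where "q \<in> ?Q" "q < x" using cInf_lessD[of ?Q x] nonempty by auto
    thus "c \<le> F x" using monoD[OF mono, of q x] by simp
  qed simp
  hence Inf_mem: "c \<le> F ?m"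
    using right_cont[of ?m] by (intro tendsto_lowerbound) (auto simp: continuous_within)
  show ?thesis
    using Inf_mem monoD[OF mono, of ?m y] cInf_lower[OF _ bdd, of y] by auto
qed

lemma bounded_sum_increments_nonpos:
  fixes a d :: "nat \<Rightarrow> real"
  assumes "a 0 = 0" "\<And>k. a (Suc k) = a k + d k" "\<And>k. a k \<le> b" "\<And>k. c \<le> d k"
  shows "c \<le> 0"
proof (rule ccontr)
  assume "\<not> c \<le> 0"
  have lower: "real k * c \<le> a k" for k
  proof (induction k)
    case (Suc k) thus ?case using assms(2,4)[of k] by (simp add: algebra_simps)
  qed (simp add: assms(1))
  obtain k :: nat where "b / c < real k" using reals_Archimedean2 by blast
  hence "b < real k * c" using \<open>\<not> c \<le> 0\<close> by (simp add: field_simps)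
  hence "b < a k" using lower[of k] by linarith
  thus False using assms(3)[of k] by simp
qed

lemma sum_lessThan_eq_first_two:
  fixes f :: "nat \<Rightarrow> 'b::comm_monoid_add"
  assumes "2 \<le> n" and "\<And>i. 2 \<le> i \<Longrightarrow> i < n \<Longrightarrow> f i = 0"
  shows "(\<Sum>i<n. f i) = f 0 + f 1"
proof -
  have "(\<Sum>i<n. f i) = (\<Sum>i\<in>{0, 1}. f i)"
    using assms by (intro sum.mono_neutral_right) auto
  thus ?thesis by simp
qed

lemma DQ_nonneg:
  assumes "0 < \<alpha>"
  shows "0 \<le> DQ \<rho> \<alpha> n X"
  using assms unfolding DQ_def Let_def by (auto intro!: divide_nonneg_pos cInf_greatest)

lemma DQ_le_of_mem:
  assumes \<alpha>: "0 < \<alpha>" and \<beta>: "0 < \<beta>" "\<beta> < 1"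
    and le: "\<rho> \<beta> (\<lambda>\<omega>. \<Sum>i<n. X i \<omega>) \<le> (\<Sum>i<n. \<rho> \<alpha> (X i))"
  shows "DQ \<rho> \<alpha> n X \<le> \<beta> / \<alpha>"
proof -
  let ?S = "{\<beta> \<in> {0<..<1}. \<rho> \<beta> (\<lambda>\<omega>. \<Sum>i<n. X i \<omega>) \<le> (\<Sum>i<n. \<rho> \<alpha> (X i))}"
  have "\<beta> \<in> ?S" using \<beta> le by simp
  moreover have "bdd_below ?S" by (intro bdd_belowI[of _ 0]) auto
  ultimately have "Inf ?S \<le> \<beta>" by (rule cInf_lower)
  thus ?thesis using \<alpha> \<open>\<beta> \<in> ?S\<close> unfolding DQ_def Let_def by (auto intro: divide_right_mono)
qed

lemma DQ_le_inverse:
  assumes "0 < \<alpha>"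
  shows "DQ \<rho> \<alpha> n X \<le> 1 / \<alpha>"
proof (cases "\<exists>\<beta>\<in>{0<..<1}. \<rho> \<beta> (\<lambda>\<omega>. \<Sum>i<n. X i \<omega>) \<le> (\<Sum>i<n. \<rho> \<alpha> (X i))")
  case True
  then obtain \<beta> where \<beta>: "0 < \<beta>" "\<beta> < 1"
    and "\<rho> \<beta> (\<lambda>\<omega>. \<Sum>i<n. X i \<omega>) \<le> (\<Sum>i<n. \<rho> \<alpha> (X i))"
    by auto
  hence "DQ \<rho> \<alpha> n X \<le> \<beta> / \<alpha>" by (intro DQ_le_of_mem[OF assms])
  also have "\<dots> \<le> 1 / \<alpha>" using \<beta> assms by (simp add: divide_right_mono)
  finally show ?thesis .
next
  case False
  thus ?thesis unfolding DQ_def Let_def by auto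
qed

text \<open>\<open>\<gamma> = 1\<close> is the case of no admissible level, where \<open>DQ\<close> falls back to \<open>1\<close>.\<close>
lemma DQ_eq_threshold:
  assumes \<gamma>: "0 \<le> \<gamma>" "\<gamma> \<le> 1"
    and iff: "\<And>\<beta>. 0 < \<beta> \<Longrightarrow> \<beta> < 1 \<Longrightarrow>
      \<rho> \<beta> (\<lambda>\<omega>. \<Sum>i<n. X i \<omega>) \<le> (\<Sum>i<n. \<rho> \<alpha> (X i)) \<longleftrightarrow> \<gamma> \<le> \<beta>"
  shows "DQ \<rho> \<alpha> n X = \<gamma> / \<alpha>"
proof -
  have S: "{\<beta> \<in> {0<..<1}. \<rho> \<beta> (\<lambda>\<omega>. \<Sum>i<n. X i \<omega>) \<le> (\<Sum>i<n. \<rho> \<alpha> (X i))}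
      = {0<..<1} \<inter> {\<gamma>..}"
    using iff by auto
  consider "\<gamma> = 0" | "0 < \<gamma>" "\<gamma> < 1" | "\<gamma> = 1" using \<gamma> by linarith
  hence "(if {0<..<1} \<inter> {\<gamma>..} = {} then 1 else Inf ({0<..<1} \<inter> {\<gamma>..})) = \<gamma>"
  proof cases
    case 1
    hence "{0<..<1} \<inter> {\<gamma>..} = {0<..<1::real}" by auto
    thus ?thesis using 1 by simp
  next
    case 2
    hence "{0<..<1} \<inter> {\<gamma>..} = {\<gamma>..<1}" by auto
    thus ?thesis using 2 by simp
  next
    case 3
    hence "{0<..<1} \<inter> {\<gamma>..} = {}" by auto
    thus ?thesis using 3 by simp
  qed
  thus ?thesis unfolding DQ_def Let_def S by simp
qed

definition uniform_01 :: "real measure" where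
  "uniform_01 = restrict_space lborel {0<..<1}"

lemma space_uniform_01: "space uniform_01 = {0<..<1}"
  by (simp add: uniform_01_def)

lemma sets_uniform_01_iff: "A \<in> sets uniform_01 \<longleftrightarrow> A \<subseteq> {0<..<1} \<and> A \<in> sets borel"
  unfolding uniform_01_def by (subst sets_restrict_space_iff) auto

lemma prob_space_uniform_01: "prob_space uniform_01"
  by (rule prob_spaceI) (simp add: space_uniform_01 uniform_01_def emeasure_restrict_space)

context prob_space
begin

section \<open>Value-at-Risk\<close>

lemma cdf_distr_eq:
  assumes "X \<in> borel_measurable M"
  shows "cdf (distr M borel X) x = prob {\<omega>\<in>space M. X \<omega> \<le> x}"
  using assms unfolding cdf_def
  by (subst measure_distr) (auto intro!: arg_cong[where f=prob])

lemma VaR_le_iff: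
  assumes X: "X \<in> borel_measurable M" and \<beta>: "0 < \<beta>" "\<beta> < 1"
  shows "VaR M \<beta> X \<le> y \<longleftrightarrow> 1 - \<beta> \<le> prob {\<omega>\<in>space M. X \<omega> \<le> y}"
proof -
  interpret D: real_distribution "distr M borel X" using X by simp
  have "VaR M \<beta> X = Inf {x. 1 - \<beta> \<le> cdf (distr M borel X) x}"
    unfolding VaR_def using cdf_distr_eq[OF X] by simp
  also have "\<dots> \<le> y \<longleftrightarrow> 1 - \<beta> \<le> cdf (distr M borel X) y"
    by (rule Inf_superlevel_le_iff)
      (use \<beta> D.cdf_nondecreasing D.cdf_is_right_cont D.cdf_lim_at_bot D.cdf_lim_at_top_prob
        in \<open>auto intro: monoI\<close>)
  finally show ?thesis using cdf_distr_eq[OF X] by simp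
qed

lemma VaR_eqI:
  assumes X: "X \<in> borel_measurable M" and \<beta>: "0 < \<beta>" "\<beta> < 1"
    and le: "1 - \<beta> \<le> prob {\<omega>\<in>space M. X \<omega> \<le> c}"
    and less: "prob {\<omega>\<in>space M. X \<omega> < c} < 1 - \<beta>"
  shows "VaR M \<beta> X = c"
proof (rule order.antisym)
  show "VaR M \<beta> X \<le> c" using VaR_le_iff[OF X \<beta>] le by simp
  show "c \<le> VaR M \<beta> X"
  proof (rule ccontr)
    assume "\<not> c \<le> VaR M \<beta> X"
    hence "prob {\<omega>\<in>space M. X \<omega> \<le> VaR M \<beta> X} \<le> prob {\<omega>\<in>space M. X \<omega> < c}"
      using X by (intro finite_measure_mono) (auto simp: borel_measurable_iff_less)
    thus False using VaR_le_iff[OF X \<beta>, of "VaR M \<beta> X"] less by simp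
  qed
qed

lemma VaR_indicator:
  assumes C: "C \<in> sets M" and \<beta>: "0 < \<beta>" "\<beta> < 1"
  shows "VaR M \<beta> (indicator C) = (if prob C \<le> \<beta> then 0 else 1)"
proof -
  have meas: "(indicator C :: 'a \<Rightarrow> real) \<in> borel_measurable M" using C by simp
  have compl: "prob (space M - C) = 1 - prob C" using prob_compl[OF C] .
  show ?thesis
  proof (cases "prob C \<le> \<beta>")
    case True
    have sets: "{\<omega>\<in>space M. (indicator C \<omega> :: real) \<le> 0} = space M - C"
      "{\<omega>\<in>space M. (indicator C \<omega> :: real) < 0} = {}"
      by (auto simp: indicator_def)
    have "VaR M \<beta> (indicator C) = 0"
      by (rule VaR_eqI[OF meas \<beta>]) (use True compl \<beta> in \<open>simp_all add: sets\<close>)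
    thus ?thesis using True by simp
  next
    case False
    have sets: "{\<omega>\<in>space M. (indicator C \<omega> :: real) \<le> 1} = space M"
      "{\<omega>\<in>space M. (indicator C \<omega> :: real) < 1} = space M - C"
      by (auto simp: indicator_def)
    have "VaR M \<beta> (indicator C) = 1"
      by (rule VaR_eqI[OF meas \<beta>]) (use False compl \<beta> in \<open>simp_all add: sets prob_space\<close>)
    thus ?thesis using False by simp
  qed
qed

lemma VaR_antimono:
  assumes X: "X \<in> borel_measurable M" and \<beta>: "0 < \<beta>" "\<beta> \<le> \<beta>'" "\<beta>' < 1"
  shows "VaR M \<beta>' X \<le> VaR M \<beta> X"
  using VaR_le_iff[OF X, of \<beta> "VaR M \<beta> X"] VaR_le_iff[OF X, of \<beta>' "VaR M \<beta> X"] \<beta> by simp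

lemma prob_exceeds_VaR_le:
  assumes X: "X \<in> borel_measurable M" and \<alpha>: "0 < \<alpha>" "\<alpha> < 1"
  shows "prob {\<omega>\<in>space M. VaR M \<alpha> X < X \<omega>} \<le> \<alpha>"
proof -
  have ev: "{\<omega>\<in>space M. VaR M \<alpha> X < X \<omega>} \<in> sets M"
    using X by (simp add: borel_measurable_iff_greater)
  have "{\<omega>\<in>space M. X \<omega> \<le> VaR M \<alpha> X} = space M - {\<omega>\<in>space M. VaR M \<alpha> X < X \<omega>}"
    by auto
  thus ?thesis
    using VaR_le_iff[OF X \<alpha>, of "VaR M \<alpha> X"] prob_compl[OF ev] by simp
qed

lemma prob_sum_exceeds_le:
  fixes X :: "nat \<Rightarrow> 'a \<Rightarrow> real" and v :: "nat \<Rightarrow> real"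
  assumes X: "\<And>i. i < n \<Longrightarrow> X i \<in> borel_measurable M"
  shows "prob {\<omega>\<in>space M. (\<Sum>i<n. v i) < (\<Sum>i<n. X i \<omega>)}
           \<le> (\<Sum>i<n. prob {\<omega>\<in>space M. v i < X i \<omega>})"
proof -
  have ev: "{\<omega>\<in>space M. v i < X i \<omega>} \<in> sets M" if "i < n" for i
    using X[OF that] by (simp add: borel_measurable_iff_greater)
  have "{\<omega>\<in>space M. (\<Sum>i<n. v i) < (\<Sum>i<n. X i \<omega>)} \<subseteq> (\<Union>i<n. {\<omega>\<in>space M. v i < X i \<omega>})"
    using sum_mono[of "{..<n}" "\<lambda>i. X i _" v] by (force simp: not_less)
  hence "prob {\<omega>\<in>space M. (\<Sum>i<n. v i) < (\<Sum>i<n. X i \<omega>)}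
           \<le> prob (\<Union>i<n. {\<omega>\<in>space M. v i < X i \<omega>})"
    using ev by (intro finite_measure_mono) auto
  also have "\<dots> \<le> (\<Sum>i<n. prob {\<omega>\<in>space M. v i < X i \<omega>})"
    using ev by (intro finite_measure_subadditive_finite) auto
  finally show ?thesis .
qed

lemma VaR_sum_le_sum_VaR:
  fixes X :: "nat \<Rightarrow> 'a \<Rightarrow> real"
  assumes X: "\<And>i. i < n \<Longrightarrow> X i \<in> borel_measurable M"
    and \<alpha>: "0 < \<alpha>" "real n * \<alpha> < 1" and n: "n \<ge> 1"
  shows "VaR M (real n * \<alpha>) (\<lambda>\<omega>. \<Sum>i<n. X i \<omega>) \<le> (\<Sum>i<n. VaR M \<alpha> (X i))"
proof -
  let ?v = "\<lambda>i. VaR M \<alpha> (X i)"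
  have "\<alpha> \<le> real n * \<alpha>" using n \<alpha> by simp
  hence \<alpha>1: "\<alpha> < 1" using \<alpha> by linarith
  have n\<alpha>: "0 < real n * \<alpha>" using n \<alpha> by simp
  have sum_meas: "(\<lambda>\<omega>. \<Sum>i<n. X i \<omega>) \<in> borel_measurable M" using X by auto
  have ev: "{\<omega>\<in>space M. (\<Sum>i<n. ?v i) < (\<Sum>i<n. X i \<omega>)} \<in> sets M"
    using sum_meas by (simp add: borel_measurable_iff_greater)
  have "prob {\<omega>\<in>space M. (\<Sum>i<n. ?v i) < (\<Sum>i<n. X i \<omega>)} \<le> (\<Sum>i<n. \<alpha>)"
    using prob_sum_exceeds_le[OF X, where v = ?v] prob_exceeds_VaR_le[OF X \<alpha>(1) \<alpha>1]
      sum_mono[of "{..<n}" "\<lambda>i. prob {\<omega>\<in>space M. ?v i < X i \<omega>}" "\<lambda>_. \<alpha>"]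
    by fastforce
  moreover have "{\<omega>\<in>space M. (\<Sum>i<n. X i \<omega>) \<le> (\<Sum>i<n. ?v i)}
      = space M - {\<omega>\<in>space M. (\<Sum>i<n. ?v i) < (\<Sum>i<n. X i \<omega>)}"
    by auto
  ultimately show ?thesis
    using VaR_le_iff[OF sum_meas n\<alpha> \<alpha>(2)] prob_compl[OF ev] by simp
qed

section \<open>Atomless probability spaces\<close>

lemma atomless_small_subset:
  assumes atomless: "atomless M" and A: "A \<in> sets M" "0 < prob A" and \<epsilon>: "0 < \<epsilon>"
  obtains B where "B \<in> sets M" "B \<subseteq> A" "0 < prob B" "prob B < \<epsilon>"
proof -
  have "\<exists>B\<in>sets M. B \<subseteq> A \<and> 0 < prob B \<and> prob B \<le> prob A / 2^k" for k
  proof (induction k)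
    case 0 show ?case using A by auto
  next
    case (Suc k)
    then obtain B where B: "B \<in> sets M" "B \<subseteq> A" "0 < prob B" "prob B \<le> prob A / 2^k" by blast
    then obtain C where C: "C \<in> sets M" "C \<subseteq> B" "0 < prob C" "prob C < prob B"
      using atomless unfolding atomless_def by blast
    have "prob (B - C) = prob B - prob C" using B C by (simp add: finite_measure_Diff)
    show ?case
    proof (cases "prob C \<le> prob B / 2")
      case True thus ?thesis using B C by (intro bexI[of _ C]) auto
    next
      case False thus ?thesis using B C \<open>prob (B - C) = _\<close> by (intro bexI[of _ "B - C"]) auto
    qed
  qed
  moreover obtain k where "(1/2::real)^k < \<epsilon>" using real_arch_pow_inv[OF \<epsilon>, of "1/2"] by auto
  moreover have "prob A / 2^k \<le> (1/2::real)^k"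
    by (simp add: divide_le_cancel power_one_over)
  ultimately show ?thesis using that by (meson le_less_trans order_trans)
qed

lemma exists_half_maximal_event:
  assumes "{} \<in> T"
  shows "\<exists>C\<in>T. \<forall>D\<in>T. prob D \<le> 2 * prob C"
proof (cases "Sup (prob ` T) \<le> 0")
  case True
  have "\<forall>D\<in>T. prob D \<le> 2 * prob {}"
    using cSup_upper[of _ "prob ` T"] True by fastforce
  thus ?thesis using assms by blast
next
  case False
  then obtain C where C: "C \<in> T" "Sup (prob ` T) / 2 < prob C"
    using less_cSupD[of "prob ` T" "Sup (prob ` T) / 2"] assms by force
  have "\<forall>D\<in>T. prob D \<le> 2 * prob C" using cSup_upper[of _ "prob ` T"] C by fastforce
  thus ?thesis using C by blast
qed

text \<open>Repeatedly add a subset of the remainder that is at least half as large as any admissible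
  one; a set still admissible at the end was admissible at every stage, so its probability is at
  most twice every increment, and the increments have a finite sum.\<close>
lemma exists_maximal_event_below:
  assumes A: "A \<in> sets M" and p: "0 \<le> p"
  obtains B where "B \<in> sets M" "B \<subseteq> A" "prob B \<le> p"
    "\<And>D. D \<in> sets M \<Longrightarrow> D \<subseteq> A - B \<Longrightarrow> prob B + prob D \<le> p \<Longrightarrow> prob D = 0"
proof -
  define good where "good B \<longleftrightarrow> B \<in> sets M \<and> B \<subseteq> A \<and> prob B \<le> p" for B
  define T where "T B = {C. C \<in> sets M \<and> C \<subseteq> A - B \<and> prob B + prob C \<le> p}" for B
  have "{} \<in> T B" if "prob B \<le> p" for B using that by (simp add: T_def)
  hence "\<forall>B. \<exists>C. prob B \<le> p \<longrightarrow> C \<in> T B \<and> (\<forall>D\<in>T B. prob D \<le> 2 * prob C)"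
    using exists_half_maximal_event by blast
  then obtain f where f: "\<And>B. prob B \<le> p \<Longrightarrow> f B \<in> T B \<and> (\<forall>D\<in>T B. prob D \<le> 2 * prob (f B))"
    by metis
  define Bs where "Bs = rec_nat {} (\<lambda>_ B. B \<union> f B)"
  have Bs_0: "Bs 0 = {}" and Bs_Suc: "\<And>k. Bs (Suc k) = Bs k \<union> f (Bs k)"
    by (simp_all add: Bs_def)
  have step: "f (Bs k) \<in> T (Bs k) \<and> prob (Bs (Suc k)) = prob (Bs k) + prob (f (Bs k))"
    if "good (Bs k)" for k
  proof -
    have f_mem: "f (Bs k) \<in> T (Bs k)" using f that by (simp add: good_def)
    hence "prob (Bs k \<union> f (Bs k)) = prob (Bs k) + prob (f (Bs k))"
      using that by (intro finite_measure_Union) (auto simp: T_def good_def)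
    thus ?thesis using f_mem by (simp add: Bs_Suc)
  qed
  have good: "good (Bs k)" for k
  proof (induction k)
    case 0 show ?case using p A by (simp add: Bs_0 good_def)
  next
    case (Suc k)
    have "f (Bs k) \<in> T (Bs k)" "prob (Bs (Suc k)) = prob (Bs k) + prob (f (Bs k))"
      using step[OF Suc] by simp_all
    thus ?case using Suc unfolding Bs_Suc T_def good_def by auto
  qed
  let ?B = "\<Union>(range Bs)"
  have range: "range Bs \<subseteq> sets M" using good by (auto simp: good_def)
  have B: "?B \<in> sets M" "?B \<subseteq> A" using good range by (auto simp: good_def)
  have lim: "(\<lambda>k. prob (Bs k)) \<longlonglongrightarrow> prob ?B"
    by (rule finite_Lim_measure_incseq[OF range]) (auto intro: incseq_SucI simp: Bs_Suc)
  have "prob ?B \<le> p"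
    by (rule LIMSEQ_le_const2[OF lim]) (use good in \<open>auto simp: good_def\<close>)
  moreover have "prob D = 0"
    if D: "D \<in> sets M" "D \<subseteq> A - ?B" "prob ?B + prob D \<le> p" for D
  proof -
    have "D \<in> T (Bs k)" for k
    proof -
      have "prob (Bs k) \<le> prob ?B" by (rule finite_measure_mono) (use B in auto)
      thus ?thesis using D by (auto simp: T_def)
    qed
    hence "prob D \<le> 2 * prob (f (Bs k))" for k using f good by (simp add: good_def)
    hence "prob D / 2 \<le> prob (f (Bs k))" for k by (simp add: field_simps)
    hence "prob D / 2 \<le> 0"
      using step good by (intro bounded_sum_increments_nonpos[of "\<lambda>k. prob (Bs k)" _ 1]) (simp_all add: Bs_0)
    thus ?thesis using measure_nonneg[of M D] by linarith
  qed
  ultimately show ?thesis using that B by blast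
qed

lemma atomless_subset_prob_eq:
  assumes atomless: "atomless M" and A: "A \<in> sets M" and p: "0 \<le> p" "p \<le> prob A"
  obtains B where "B \<in> sets M" "B \<subseteq> A" "prob B = p"
proof -
  obtain B where B: "B \<in> sets M" "B \<subseteq> A" "prob B \<le> p"
    and maximal: "\<And>D. D \<in> sets M \<Longrightarrow> D \<subseteq> A - B \<Longrightarrow> prob B + prob D \<le> p \<Longrightarrow> prob D = 0"
    using exists_maximal_event_below[OF A p(1)] by blast
  have "\<not> prob B < p"
  proof
    assume less: "prob B < p"
    have rest: "A - B \<in> sets M" using A B by auto
    have "0 < prob (A - B)" using A B less p by (simp add: finite_measure_Diff)
    moreover have "0 < p - prob B" using less by simp
    ultimately obtain D where "D \<in> sets M" "D \<subseteq> A - B" "0 < prob D" "prob D < p - prob B"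
      using atomless_small_subset[OF atomless rest] by blast
    thus False using maximal[of D] by simp
  qed
  thus ?thesis using that B by simp
qed

lemma atomless_disjoint_family:
  assumes atomless: "atomless M" and q: "0 \<le> q" "real k * q \<le> 1"
  obtains A where "\<And>i. i < k \<Longrightarrow> A i \<in> sets M" "\<And>i. i < k \<Longrightarrow> prob (A i) = q"
    "disjoint_family_on A {..<k}"
  using q(2)
proof (induction k arbitrary: thesis)
  case 0 thus ?case by (auto simp: disjoint_family_on_def)
next
  case (Suc k)
  have "real k * q \<le> 1" using Suc.prems q(1) by (simp add: algebra_simps)
  then obtain A where A: "\<And>i. i < k \<Longrightarrow> A i \<in> sets M" "\<And>i. i < k \<Longrightarrow> prob (A i) = q"
    "disjoint_family_on A {..<k}"
    using Suc.IH by blast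
  let ?U = "\<Union>i<k. A i"
  have U: "?U \<in> sets M" using A by auto
  have "prob ?U = (\<Sum>i<k. prob (A i))"
    using A by (intro finite_measure_finite_Union) auto
  hence "prob (space M - ?U) = 1 - real k * q" using prob_compl[OF U] A(2) by simp
  moreover have "q \<le> 1 - real k * q" using Suc.prems by (simp add: algebra_simps)
  ultimately obtain B where B: "B \<in> sets M" "B \<subseteq> space M - ?U" "prob B = q"
    using atomless_subset_prob_eq[OF atomless sets.compl_sets[OF U] q(1)] by auto
  show ?case
  proof (rule Suc.prems(1))
    fix i assume "i < Suc k"
    thus "(A(k := B)) i \<in> sets M" "prob ((A(k := B)) i) = q"
      using A(1,2)[of i] B by (auto simp: less_Suc_eq)
  next
    show "disjoint_family_on (A(k := B)) {..<Suc k}"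
      using A(3) B(2) unfolding disjoint_family_on_def by (auto simp: lessThan_Suc)
  qed
qed

lemma DQ_VaR_le:
  assumes X: "\<forall>i<n. X i \<in> borel_measurable M" and n: "n \<ge> 1" and \<alpha>: "0 < \<alpha>"
  shows "DQ (VaR M) \<alpha> n X \<le> min (real n) (1 / \<alpha>)"
proof -
  have "DQ (VaR M) \<alpha> n X \<le> real n"
  proof (cases "real n * \<alpha> < 1")
    case True
    have "DQ (VaR M) \<alpha> n X \<le> real n * \<alpha> / \<alpha>"
      using VaR_sum_le_sum_VaR[of n X \<alpha>] X n \<alpha> True by (intro DQ_le_of_mem) auto
    thus ?thesis using \<alpha> by simp
  next
    case False
    hence "1 / \<alpha> \<le> real n" using \<alpha> by (simp add: field_simps)
    thus ?thesis using DQ_le_inverse[OF \<alpha>, of "VaR M" n X] by linarith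
  qed
  thus ?thesis using DQ_le_inverse[OF \<alpha>, of "VaR M" n X] by simp
qed

text \<open>Indicators of \<open>n\<close> disjoint events of probability \<open>t \<alpha> / n \<le> \<alpha>\<close>: each has
  \<open>VaR\<^sub>\<alpha> = 0\<close>, while their sum exceeds \<open>0\<close> with probability exactly \<open>t \<alpha>\<close>.\<close>
lemma DQ_VaR_attains:
  assumes atomless: "atomless M" and n: "n \<ge> 1" and \<alpha>: "0 < \<alpha>" "\<alpha> < 1"
    and t: "0 \<le> t" "t \<le> min (real n) (1 / \<alpha>)"
  obtains X where "\<forall>i<n. X i \<in> borel_measurable M" "DQ (VaR M) \<alpha> n X = t"
proof -
  define \<gamma> where "\<gamma> = t * \<alpha>"
  define q where "q = \<gamma> / real n"
  have \<gamma>: "0 \<le> \<gamma>" "\<gamma> \<le> 1" using t \<alpha> by (auto simp: \<gamma>_def le_divide_eq)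
  have q: "0 \<le> q" "real n * q = \<gamma>" "q \<le> \<alpha>"
    using \<gamma> t \<alpha> n by (auto simp: q_def \<gamma>_def field_simps)
  obtain A where A: "\<And>i. i < n \<Longrightarrow> A i \<in> sets M" "\<And>i. i < n \<Longrightarrow> prob (A i) = q"
    and disj: "disjoint_family_on A {..<n}"
    using atomless_disjoint_family[OF atomless q(1), of n] q(2) \<gamma>(2) by auto
  define X where "X i = (indicator (A i) :: 'a \<Rightarrow> real)" for i
  let ?U = "\<Union>i<n. A i"
  have U: "?U \<in> sets M" using A by auto
  have "prob ?U = (\<Sum>i<n. prob (A i))"
    using A disj by (intro finite_measure_finite_Union) auto
  hence prob_U: "prob ?U = \<gamma>" using A(2) q(2) by simp
  have sum_X: "(\<lambda>\<omega>. \<Sum>i<n. X i \<omega>) = indicator ?U"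
    by (simp add: X_def fun_eq_iff indicator_UN_disjoint[OF _ disj])
  have "VaR M \<alpha> (X i) = 0" if "i < n" for i
    using VaR_indicator[OF A(1)[OF that] \<alpha>] A(2)[OF that] q(3) by (simp add: X_def)
  hence "VaR M \<beta> (\<lambda>\<omega>. \<Sum>i<n. X i \<omega>) \<le> (\<Sum>i<n. VaR M \<alpha> (X i)) \<longleftrightarrow> \<gamma> \<le> \<beta>"
    if "0 < \<beta>" "\<beta> < 1" for \<beta>
    using VaR_indicator[OF U that] prob_U by (simp add: sum_X)
  hence "DQ (VaR M) \<alpha> n X = \<gamma> / \<alpha>" by (intro DQ_eq_threshold[OF \<gamma>])
  hence "DQ (VaR M) \<alpha> n X = t" using \<alpha> by (simp add: \<gamma>_def)
  moreover have "\<forall>i<n. X i \<in> borel_measurable M" using A by (simp add: X_def)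
  ultimately show ?thesis using that by blast
qed

lemma DQ_VaR_range:
  assumes atomless: "atomless M" and n: "n \<ge> 1" and \<alpha>: "0 < \<alpha>" "\<alpha> < 1"
  shows "{DQ (VaR M) \<alpha> n X | X. \<forall>i<n. X i \<in> borel_measurable M} = {0 .. min (real n) (1 / \<alpha>)}"
proof (intro antisym subsetI)
  fix t assume "t \<in> {DQ (VaR M) \<alpha> n X | X. \<forall>i<n. X i \<in> borel_measurable M}"
  thus "t \<in> {0 .. min (real n) (1 / \<alpha>)}" using DQ_nonneg DQ_VaR_le n \<alpha> by auto
next
  fix t assume "t \<in> {0 .. min (real n) (1 / \<alpha>)}"
  then obtain X where "\<forall>i<n. X i \<in> borel_measurable M" "DQ (VaR M) \<alpha> n X = t"
    using DQ_VaR_attains[OF atomless n \<alpha>, of t] by auto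
  thus "t \<in> {DQ (VaR M) \<alpha> n X | X. \<forall>i<n. X i \<in> borel_measurable M}" by force
qed

section \<open>The quantile transform and Expected Shortfall\<close>

lemma measurable_VaR_uniform_01:
  assumes X: "X \<in> borel_measurable M"
  shows "(\<lambda>\<beta>. VaR M \<beta> X) \<in> borel_measurable uniform_01"
proof -
  have "{\<beta> \<in> space uniform_01. VaR M \<beta> X \<le> y}
      = {0<..<1} \<inter> {1 - prob {\<omega>\<in>space M. X \<omega> \<le> y}..}" for y
    using VaR_le_iff[OF X] by (auto simp: space_uniform_01)
  thus ?thesis by (auto simp: borel_measurable_iff_le sets_uniform_01_iff)
qed

text \<open>Both sides have cdf \<open>F\<^sub>X\<close>, since \<open>VaR\<^sub>\<beta>(X) \<le> y\<close> iff \<open>\<beta> \<ge> 1 - F\<^sub>X(y)\<close>.\<close>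
lemma distr_VaR_uniform_01:
  assumes X: "X \<in> borel_measurable M"
  shows "distr uniform_01 borel (\<lambda>\<beta>. VaR M \<beta> X) = distr M borel X"
proof (rule cdf_unique)
  interpret U: prob_space uniform_01 by (rule prob_space_uniform_01)
  show "real_distribution (distr uniform_01 borel (\<lambda>\<beta>. VaR M \<beta> X))"
    using measurable_VaR_uniform_01[OF X] by simp
  show "real_distribution (distr M borel X)" using X by simp
  show "cdf (distr uniform_01 borel (\<lambda>\<beta>. VaR M \<beta> X)) = cdf (distr M borel X)"
  proof
    fix y
    let ?F = "prob {\<omega>\<in>space M. X \<omega> \<le> y}"
    have F_cases: "?F < 1 \<or> ?F = 1" by (meson prob_le_1 le_less)
    have "{\<beta> \<in> space uniform_01. VaR M \<beta> X \<le> y} = {0<..<1} \<inter> {1 - ?F..}"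
      using VaR_le_iff[OF X] by (auto simp: space_uniform_01)
    also have "\<dots> = (if ?F = 1 then {0<..<1} else {1 - ?F..<1})"
      using F_cases by auto
    finally have level_set: "{\<beta> \<in> space uniform_01. VaR M \<beta> X \<le> y}
        = (if ?F = 1 then {0<..<1} else {1 - ?F..<1})" .
    have "cdf (distr uniform_01 borel (\<lambda>\<beta>. VaR M \<beta> X)) y
        = measure uniform_01 {\<beta> \<in> space uniform_01. VaR M \<beta> X \<le> y}"
      by (rule U.cdf_distr_eq[OF measurable_VaR_uniform_01[OF X]])
    also have "\<dots> = measure lborel (if ?F = 1 then {0<..<1} else {1 - ?F..<1::real})"
      unfolding level_set unfolding uniform_01_def
      by (subst measure_restrict_space) (use F_cases in auto)
    also have "\<dots> = ?F" by simp
    finally show "cdf (distr uniform_01 borel (\<lambda>\<beta>. VaR M \<beta> X)) y = cdf (distr M borel X) y"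
      using cdf_distr_eq[OF X] by simp
  qed
qed

lemma integrable_VaR_iff:
  assumes X: "X \<in> borel_measurable M" and g: "g \<in> borel_measurable borel"
  shows "integrable lborel (\<lambda>\<beta>. indicator {0<..<1} \<beta> * g (VaR M \<beta> X))
    \<longleftrightarrow> integrable M (\<lambda>\<omega>. g (X \<omega>) :: real)"
proof -
  have "integrable lborel (\<lambda>\<beta>. indicator {0<..<1} \<beta> * g (VaR M \<beta> X))
      \<longleftrightarrow> integrable uniform_01 (\<lambda>\<beta>. g (VaR M \<beta> X))"
    unfolding uniform_01_def by (subst integrable_restrict_space) auto
  also have "\<dots> \<longleftrightarrow> integrable (distr uniform_01 borel (\<lambda>\<beta>. VaR M \<beta> X)) g"
    using measurable_VaR_uniform_01[OF X] g by (subst integrable_distr_eq) auto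
  also have "\<dots> \<longleftrightarrow> integrable M (\<lambda>\<omega>. g (X \<omega>))"
    using X g by (simp add: distr_VaR_uniform_01 integrable_distr_eq)
  finally show ?thesis .
qed

lemma integral_VaR_eq:
  assumes X: "X \<in> borel_measurable M" and g: "g \<in> borel_measurable borel"
  shows "integral\<^sup>L lborel (\<lambda>\<beta>. indicator {0<..<1} \<beta> * g (VaR M \<beta> X))
    = expectation (\<lambda>\<omega>. g (X \<omega>) :: real)"
proof -
  have "integral\<^sup>L lborel (\<lambda>\<beta>. indicator {0<..<1} \<beta> * g (VaR M \<beta> X))
      = integral\<^sup>L uniform_01 (\<lambda>\<beta>. g (VaR M \<beta> X))"
    unfolding uniform_01_def by (subst integral_restrict_space) auto
  also have "\<dots> = integral\<^sup>L (distr uniform_01 borel (\<lambda>\<beta>. VaR M \<beta> X)) g"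
    using measurable_VaR_uniform_01[OF X] g by (subst integral_distr) auto
  also have "\<dots> = expectation (\<lambda>\<omega>. g (X \<omega>))"
    using X g by (simp add: distr_VaR_uniform_01 integral_distr)
  finally show ?thesis .
qed

lemma integrable_VaR_lower_tail:
  assumes X: "integrable M X" and \<alpha>: "\<alpha> \<le> 1"
  shows "integrable lborel (\<lambda>\<beta>. indicator {0<..<\<alpha>} \<beta> * VaR M \<beta> X)"
proof -
  have "X \<in> borel_measurable M" "(\<lambda>x::real. x) \<in> borel_measurable borel" using X by simp_all
  hence "integrable lborel (\<lambda>\<beta>. indicator {0<..<1} \<beta> * VaR M \<beta> X)"
    using integrable_VaR_iff X by blast
  hence "integrable lborel (\<lambda>\<beta>. indicator {0<..<\<alpha>} \<beta> *\<^sub>R (indicator {0<..<1} \<beta> * VaR M \<beta> X))"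
    by (rule integrable_mult_indicator[rotated]) simp
  also have "(\<lambda>\<beta>. indicator {0<..<\<alpha>} \<beta> *\<^sub>R (indicator {0<..<1} \<beta> * VaR M \<beta> X))
      = (\<lambda>\<beta>. indicator {0<..<\<alpha>} \<beta> * VaR M \<beta> X)"
    using \<alpha> by (auto simp: fun_eq_iff split: split_indicator)
  finally show ?thesis .
qed

lemma integral_Rockafellar_Uryasev:
  assumes X: "integrable M X" and \<alpha>: "0 < \<alpha>"
  shows "integrable lborel (\<lambda>\<beta>. indicator {0<..<\<alpha>} \<beta> * t + indicator {0<..<1} \<beta> * max 0 (VaR M \<beta> X - t))"
      (is "integrable lborel ?f")
    and "integral\<^sup>L lborel (\<lambda>\<beta>. indicator {0<..<\<alpha>} \<beta> * t + indicator {0<..<1} \<beta> * max 0 (VaR M \<beta> X - t))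
           = \<alpha> * t + expectation (\<lambda>\<omega>. max 0 (X \<omega> - t))"
proof -
  have g: "(\<lambda>x::real. max 0 (x - t)) \<in> borel_measurable borel" by measurable
  have X_meas: "X \<in> borel_measurable M" using X by simp
  have const: "integrable lborel (\<lambda>\<beta>. indicator {0<..<\<alpha>} \<beta> * t)"
    using \<alpha> by (intro integrable_mult_left integrable_real_indicator) (auto simp: emeasure_lborel_Ioo)
  have tail: "integrable lborel (\<lambda>\<beta>. indicator {0<..<1} \<beta> * max 0 (VaR M \<beta> X - t))"
    using integrable_VaR_iff[OF X_meas g] X by simp
  show "integrable lborel ?f" using const tail by simp
  show "integral\<^sup>L lborel ?f = \<alpha> * t + expectation (\<lambda>\<omega>. max 0 (X \<omega> - t))"
    using const tail integral_VaR_eq[OF X_meas g] \<alpha>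
    by (simp add: Bochner_Integration.integral_add integral_mult_left_zero)
qed

text \<open>Both Rockafellar--Uryasev facts compare integrands on \<open>(0,1)\<close>: for \<open>\<beta> < \<alpha>\<close> one has
  \<open>VaR\<^sub>\<beta>(X) \<le> t + max 0 (VaR\<^sub>\<beta>(X) - t)\<close>, and for \<open>t = VaR\<^sub>\<alpha>(X)\<close> this is an equality,
  while the excess vanishes for \<open>\<beta> \<ge> \<alpha>\<close>, because \<open>VaR\<close> is antitone in the level.\<close>
lemma ES_le_Rockafellar_Uryasev:
  assumes X: "integrable M X" and \<alpha>: "0 < \<alpha>" "\<alpha> < 1"
  shows "ES M \<alpha> X \<le> t + expectation (\<lambda>\<omega>. max 0 (X \<omega> - t)) / \<alpha>"
proof -
  let ?I = "integral\<^sup>L lborel (\<lambda>\<beta>. indicator {0<..<\<alpha>} \<beta> * VaR M \<beta> X)"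
  let ?E = "expectation (\<lambda>\<omega>. max 0 (X \<omega> - t))"
  have "?I \<le> integral\<^sup>L lborel (\<lambda>\<beta>. indicator {0<..<\<alpha>} \<beta> * t
                            + indicator {0<..<1} \<beta> * max 0 (VaR M \<beta> X - t))"
    using integrable_VaR_lower_tail[OF X] integral_Rockafellar_Uryasev(1)[OF X \<alpha>(1)] \<alpha>
    by (intro integral_mono) (auto split: split_indicator)
  also have "\<dots> = \<alpha> * t + ?E" by (rule integral_Rockafellar_Uryasev(2)[OF X \<alpha>(1)])
  finally have "?I / \<alpha> \<le> (\<alpha> * t + ?E) / \<alpha>" using \<alpha> by (simp add: divide_right_mono)
  also have "\<dots> = t + ?E / \<alpha>" using \<alpha> by (simp add: field_simps)
  finally show ?thesis by (simp add: ES_def set_lebesgue_integral_def)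
qed

lemma ES_eq_Rockafellar_Uryasev:
  assumes X: "integrable M X" and \<alpha>: "0 < \<alpha>" "\<alpha> < 1"
  shows "ES M \<alpha> X = VaR M \<alpha> X + expectation (\<lambda>\<omega>. max 0 (X \<omega> - VaR M \<alpha> X)) / \<alpha>"
proof -
  let ?t = "VaR M \<alpha> X"
  have X_meas: "X \<in> borel_measurable M" using X by simp
  have "indicator {0<..<\<alpha>} \<beta> * VaR M \<beta> X
      = indicator {0<..<\<alpha>} \<beta> * ?t + indicator {0<..<1} \<beta> * max 0 (VaR M \<beta> X - ?t)" for \<beta>
    using VaR_antimono[OF X_meas, of \<beta> \<alpha>] VaR_antimono[OF X_meas, of \<alpha> \<beta>] \<alpha>
    by (auto split: split_indicator)
  hence "integral\<^sup>L lborel (\<lambda>\<beta>. indicator {0<..<\<alpha>} \<beta> * VaR M \<beta> X)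
      = \<alpha> * ?t + expectation (\<lambda>\<omega>. max 0 (X \<omega> - ?t))"
    using integral_Rockafellar_Uryasev(2)[OF X \<alpha>(1)] by simp
  thus ?thesis using \<alpha> by (simp add: ES_def set_lebesgue_integral_def field_simps)
qed

lemma ES_sum_le_sum_ES:
  fixes X :: "nat \<Rightarrow> 'a \<Rightarrow> real"
  assumes X: "\<And>i. i < n \<Longrightarrow> integrable M (X i)" and \<alpha>: "0 < \<alpha>" "\<alpha> < 1"
  shows "ES M \<alpha> (\<lambda>\<omega>. \<Sum>i<n. X i \<omega>) \<le> (\<Sum>i<n. ES M \<alpha> (X i))"
proof -
  let ?t = "\<lambda>i. VaR M \<alpha> (X i)"
  let ?excess = "\<lambda>i \<omega>. max 0 (X i \<omega> - ?t i)"
  have excess: "integrable M (?excess i)" if "i < n" for i using X[OF that] by auto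
  have sum_int: "integrable M (\<lambda>\<omega>. \<Sum>i<n. X i \<omega>)" using X by auto
  have "ES M \<alpha> (\<lambda>\<omega>. \<Sum>i<n. X i \<omega>)
      \<le> (\<Sum>i<n. ?t i) + expectation (\<lambda>\<omega>. max 0 ((\<Sum>i<n. X i \<omega>) - (\<Sum>i<n. ?t i))) / \<alpha>"
    using X \<alpha> by (intro ES_le_Rockafellar_Uryasev) auto
  also have "expectation (\<lambda>\<omega>. max 0 ((\<Sum>i<n. X i \<omega>) - (\<Sum>i<n. ?t i)))
      \<le> expectation (\<lambda>\<omega>. \<Sum>i<n. ?excess i \<omega>)"
  proof (rule integral_mono)
    fix \<omega>
    have "(\<Sum>i<n. X i \<omega>) - (\<Sum>i<n. ?t i) \<le> (\<Sum>i<n. ?excess i \<omega>)"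
      unfolding sum_subtractf[symmetric] by (intro sum_mono) simp
    thus "max 0 ((\<Sum>i<n. X i \<omega>) - (\<Sum>i<n. ?t i)) \<le> (\<Sum>i<n. ?excess i \<omega>)"
      by (simp add: sum_nonneg)
  qed (use sum_int excess in auto)
  also have "expectation (\<lambda>\<omega>. \<Sum>i<n. ?excess i \<omega>) = (\<Sum>i<n. expectation (?excess i))"
    using excess by (intro Bochner_Integration.integral_sum) auto
  finally have "ES M \<alpha> (\<lambda>\<omega>. \<Sum>i<n. X i \<omega>)
      \<le> (\<Sum>i<n. ?t i) + (\<Sum>i<n. expectation (?excess i)) / \<alpha>"
    using \<alpha> by (simp add: divide_right_mono)
  also have "\<dots> = (\<Sum>i<n. ES M \<alpha> (X i))"
    using ES_eq_Rockafellar_Uryasev[OF X \<alpha>]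
    by (simp add: sum.distrib sum_divide_distrib)
  finally show ?thesis .
qed

lemma integrable_indicator_real:
  "A \<in> sets M \<Longrightarrow> integrable M (indicator A :: 'a \<Rightarrow> real)"
  by (intro integrable_real_indicator) (simp_all add: emeasure_finite less_top[symmetric])

lemma ES_indicator:
  assumes C: "C \<in> sets M" and \<beta>: "0 < \<beta>" "\<beta> < 1"
  shows "ES M \<beta> (indicator C) = min (prob C) \<beta> / \<beta>"
proof -
  have int: "integrable M (indicator C :: 'a \<Rightarrow> real)" using C by (rule integrable_indicator_real)
  show ?thesis
  proof (cases "prob C \<le> \<beta>")
    case True
    have "(\<lambda>\<omega>. max 0 ((indicator C \<omega> :: real) - 0)) = indicator C"
      by (auto simp: fun_eq_iff indicator_def)
    thus ?thesis
      using ES_eq_Rockafellar_Uryasev[OF int \<beta>] VaR_indicator[OF C \<beta>] True C by simp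
  next
    case False
    have "(\<lambda>\<omega>. max 0 ((indicator C \<omega> :: real) - 1)) = (\<lambda>_. 0)"
      by (auto simp: fun_eq_iff indicator_def)
    thus ?thesis
      using ES_eq_Rockafellar_Uryasev[OF int \<beta>] VaR_indicator[OF C \<beta>] False \<beta> by simp
  qed
qed

lemma ES_eq_0_of_nonpos:
  assumes Y: "integrable M Y" and nonpos: "\<And>\<omega>. \<omega> \<in> space M \<Longrightarrow> Y \<omega> \<le> 0"
    and neg: "prob {\<omega>\<in>space M. Y \<omega> < 0} < 1 - \<beta>" and \<beta>: "0 < \<beta>" "\<beta> < 1"
  shows "ES M \<beta> Y = 0"
proof -
  have "{\<omega>\<in>space M. Y \<omega> \<le> 0} = space M" using nonpos by auto
  hence "VaR M \<beta> Y = 0"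
    using Y neg \<beta> by (intro VaR_eqI) (auto simp: prob_space)
  moreover have "expectation (\<lambda>\<omega>. max 0 (Y \<omega> - 0)) = 0"
    using nonpos by (simp add: Bochner_Integration.integral_cong[where g = "\<lambda>_. 0"] max_absorb1)
  ultimately show ?thesis using ES_eq_Rockafellar_Uryasev[OF Y \<beta>] by simp
qed

lemma ES_indicator_diff_subset:
  assumes B: "B \<in> sets M" "B \<subseteq> C" and C: "C \<in> sets M" "prob C < 1 - \<beta>"
    and \<beta>: "0 < \<beta>" "\<beta> < 1"
  shows "ES M \<beta> (\<lambda>\<omega>. indicator B \<omega> - indicator C \<omega>) = 0"
proof (rule ES_eq_0_of_nonpos[OF _ _ _ \<beta>])
  show "integrable M (\<lambda>\<omega>. indicator B \<omega> - indicator C \<omega> :: real)"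
    using B C by (intro Bochner_Integration.integrable_diff integrable_indicator_real)
  show "indicator B \<omega> - indicator C \<omega> \<le> (0::real)" for \<omega>
    using B(2) by (auto simp: indicator_def)
  have "{\<omega>\<in>space M. indicator B \<omega> - indicator C \<omega> < (0::real)} \<subseteq> C"
    by (auto simp: indicator_def split: if_splits)
  hence "prob {\<omega>\<in>space M. indicator B \<omega> - indicator C \<omega> < (0::real)} \<le> prob C"
    by (rule finite_measure_mono[OF _ C(1)])
  thus "prob {\<omega>\<in>space M. indicator B \<omega> - indicator C \<omega> < (0::real)} < 1 - \<beta>"
    using C(2) by simp
qed

lemma DQ_ES_le_1:
  assumes X: "\<forall>i<n. integrable M (X i)" and \<alpha>: "0 < \<alpha>" "\<alpha> < 1"
  shows "DQ (ES M) \<alpha> n X \<le> 1"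
  using DQ_le_of_mem[OF \<alpha>(1) \<alpha>] ES_sum_le_sum_ES[of n X \<alpha>] X \<alpha> by simp

text \<open>With \<open>\<gamma> = t \<alpha>\<close> and events \<open>B \<subseteq> C\<close> of probabilities \<open>\<gamma> (1 - \<alpha>) \<le> \<alpha> (1 - \<alpha>)\<close>,
  the portfolio \<open>(1\<^sub>C, 1\<^sub>B - 1\<^sub>C, 0, \<dots>, 0)\<close> has \<open>\<Sum>\<^sub>i ES\<^sub>\<alpha>(X\<^sub>i) = 1 - \<alpha>\<close> and total
  loss \<open>1\<^sub>B\<close>, and \<open>ES\<^sub>\<beta>(1\<^sub>B) = min(\<gamma>(1 - \<alpha>), \<beta>) / \<beta> \<le> 1 - \<alpha>\<close> exactly when \<open>\<beta> \<ge> \<gamma>\<close>.\<close>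
lemma DQ_ES_attains:
  assumes atomless: "atomless M" and n: "n \<ge> 2" and \<alpha>: "0 < \<alpha>" "\<alpha> < 1"
    and t: "0 \<le> t" "t \<le> 1"
  obtains X where "\<forall>i<n. integrable M (X i)" "DQ (ES M) \<alpha> n X = t"
proof -
  define \<gamma> where "\<gamma> = t * \<alpha>"
  define s where "s = \<alpha> * (1 - \<alpha>)"
  define q where "q = \<gamma> * (1 - \<alpha>)"
  have \<gamma>: "0 \<le> \<gamma>" "\<gamma> \<le> \<alpha>" using t \<alpha> by (auto simp: \<gamma>_def mult_le_cancel_right1)
  have s: "0 < s" "s < 1 - \<alpha>" "s < \<alpha>" using \<alpha> by (auto simp: s_def)
  have q: "0 \<le> q" "q \<le> s" "q \<le> \<gamma>"
    using \<gamma> \<alpha> by (auto simp: q_def s_def mult_right_mono mult_left_le)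
  have "s \<le> prob (space M)" using s by (simp add: prob_space)
  then obtain C where C: "C \<in> sets M" "prob C = s"
    using atomless_subset_prob_eq[OF atomless sets.top less_imp_le[OF s(1)]] by blast
  have "q \<le> prob C" using q C by simp
  then obtain B where B: "B \<in> sets M" "B \<subseteq> C" "prob B = q"
    using atomless_subset_prob_eq[OF atomless C(1) q(1)] by blast
  define X :: "nat \<Rightarrow> 'a \<Rightarrow> real" where
    "X i = (if i = 0 then indicator C else if i = 1 then (\<lambda>\<omega>. indicator B \<omega> - indicator C \<omega>)
            else (\<lambda>_. 0))" for i
  have X_int: "\<forall>i<n. integrable M (X i)" using B C by (auto simp: X_def intro!: integrable_indicator_real)
  have sum_X: "(\<lambda>\<omega>. \<Sum>i<n. X i \<omega>) = indicator B"
    using sum_lessThan_eq_first_two[OF n, of "\<lambda>i. X i _"] by (auto simp: X_def fun_eq_iff)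
  have "ES M \<alpha> (X 1) = 0"
    using ES_indicator_diff_subset[OF B(1,2) C(1) _ \<alpha>] C(2) s(2) by (simp add: X_def)
  moreover have "ES M \<alpha> (X i) = 0" if "2 \<le> i" for i
    using that \<alpha> by (intro ES_eq_0_of_nonpos) (auto simp: X_def)
  ultimately have sum_ES: "(\<Sum>i<n. ES M \<alpha> (X i)) = 1 - \<alpha>"
    using sum_lessThan_eq_first_two[OF n, of "\<lambda>i. ES M \<alpha> (X i)"] ES_indicator[OF C(1) \<alpha>] C(2) s \<alpha>
    by (simp add: X_def s_def)
  have "ES M \<beta> (\<lambda>\<omega>. \<Sum>i<n. X i \<omega>) \<le> (\<Sum>i<n. ES M \<alpha> (X i)) \<longleftrightarrow> \<gamma> \<le> \<beta>"
    if \<beta>: "0 < \<beta>" "\<beta> < 1" for \<beta>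
  proof (cases "q \<le> \<beta>")
    case True
    have "q / \<beta> \<le> 1 - \<alpha> \<longleftrightarrow> \<gamma> * (1 - \<alpha>) \<le> \<beta> * (1 - \<alpha>)"
      using \<beta> by (simp add: q_def divide_le_eq mult.commute)
    thus ?thesis using ES_indicator[OF B(1) \<beta>] B(3) True \<alpha> by (simp add: sum_X sum_ES)
  next
    case False
    thus ?thesis using ES_indicator[OF B(1) \<beta>] B(3) \<beta> \<alpha> q(3) by (simp add: sum_X sum_ES)
  qed
  hence "DQ (ES M) \<alpha> n X = \<gamma> / \<alpha>" using \<gamma> \<alpha> by (intro DQ_eq_threshold) auto
  hence "DQ (ES M) \<alpha> n X = t" using \<alpha> by (simp add: \<gamma>_def)
  thus ?thesis using that X_int by blast
qed

lemma DQ_ES_range: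
  assumes atomless: "atomless M" and n: "n \<ge> 2" and \<alpha>: "0 < \<alpha>" "\<alpha> < 1"
  shows "{DQ (ES M) \<alpha> n X | X. \<forall>i<n. integrable M (X i)} = {0 .. 1}"
proof (intro antisym subsetI)
  fix t assume "t \<in> {DQ (ES M) \<alpha> n X | X. \<forall>i<n. integrable M (X i)}"
  thus "t \<in> {0 .. 1}" using DQ_nonneg DQ_ES_le_1 \<alpha> by auto
next
  fix t :: real assume "t \<in> {0 .. 1}"
  then obtain X where "\<forall>i<n. integrable M (X i)" "DQ (ES M) \<alpha> n X = t"
    using DQ_ES_attains[OF atomless n \<alpha>, of t] by auto
  thus "t \<in> {DQ (ES M) \<alpha> n X | X. \<forall>i<n. integrable M (X i)}" by force
qed

end

theorem theorem1:
  fixes M :: "'a measure" and n :: nat and \<alpha> :: real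
  assumes "prob_space M" and "atomless M"
    and "n \<ge> 2" and "0 < \<alpha>" and "\<alpha> < 1"
  shows "{DQ (VaR M) \<alpha> n X | X. \<forall>i<n. X i \<in> borel_measurable M} = {0 .. min (real n) (1 / \<alpha>)}
       \<and> {DQ (ES M) \<alpha> n X | X. \<forall>i<n. integrable M (X i)} = {0 .. 1}"
proof -
  interpret prob_space M by fact
  show ?thesis
    using DQ_VaR_range[of n \<alpha>] DQ_ES_range[of n \<alpha>] assms by simp
qed

end
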